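(* Let $T$ be a simplex in $\mathbb{E}^3$ all four of whose facets have the same area. Then the axis of any circumscribing cylinder of $T$ of minimum radius is perpendicular to two opposite edges of $T$ (i.e. to two edges having no vertex in common).
   Context: A cylinder in $\mathbb{E}^3$ is the set of points at a fixed distance $\rho>0$ (its radius) from a line (its axis). A cylinder is circumscribing for a simplex if all vertices of the simplex lie on it. *)

theory Defs
  imports "HOL-Analysis.Analysis" "HOL-Analysis.Cross3"
begin

definition is_line :: "(real^3) set \<Rightarrow> bool" where
  "is_line L \<longleftrightarrow> (\<exists>p u. u \<noteq> 0 \<and> L = {p + t *\<^sub>R u | t. True})"

definition cylinder :: "(real^3) set \<Rightarrow> real \<Rightarrow> (real^3) set" where
  "cylinder L \<rho> = {x. infdist x L = \<rho>}"

definition circumscribing_cylinder ::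
  "(real^3) set \<Rightarrow> real \<Rightarrow> real^3 \<Rightarrow> real^3 \<Rightarrow> real^3 \<Rightarrow> real^3 \<Rightarrow> bool" where
  "circumscribing_cylinder L \<rho> a b c d \<longleftrightarrow>
     is_line L \<and> \<rho> > 0 \<and> {a, b, c, d} \<subseteq> cylinder L \<rho>"

definition min_circumscribing_cylinder ::
  "(real^3) set \<Rightarrow> real \<Rightarrow> real^3 \<Rightarrow> real^3 \<Rightarrow> real^3 \<Rightarrow> real^3 \<Rightarrow> bool" where
  "min_circumscribing_cylinder L \<rho> a b c d \<longleftrightarrow>
     circumscribing_cylinder L \<rho> a b c d \<and>
     (\<forall>L' \<rho>'. circumscribing_cylinder L' \<rho>' a b c d \<longrightarrow> \<rho> \<le> \<rho>')"

definition line_perp :: "(real^3) set \<Rightarrow> real^3 \<Rightarrow> bool" where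
  "line_perp L w \<longleftrightarrow> (\<forall>x\<in>L. \<forall>y\<in>L. inner (x - y) w = 0)"

definition tri_area :: "real^3 \<Rightarrow> real^3 \<Rightarrow> real^3 \<Rightarrow> real" where
  "tri_area a b c = norm (cross3 (b - a) (c - a)) / 2"

definition is_simplex3 :: "real^3 \<Rightarrow> real^3 \<Rightarrow> real^3 \<Rightarrow> real^3 \<Rightarrow> bool" where
  "is_simplex3 a b c d \<longleftrightarrow> card {a, b, c, d} = 4 \<and> \<not> affine_dependent {a, b, c, d}"

end

theory Submission
  imports Defs
begin

(* Put the vertices at q + e1 + e2 + e3, q + e1 - e2 - e3, q - e1 + e2 - e3, q - e1 - e2 + e3.
   The facet normals are then 4 (X + Y + Z), 4 (-X + Y + Z), 4 (X - Y + Z), 4 (X + Y - Z) up to sign,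
   with X = e2 x e3, Y = e3 x e1, Z = e1 x e2, so equal facet areas make X, Y, Z, and hence
   e1, e2, e3, pairwise orthogonal: the simplex consists of alternate corners of a box.
   Each box axis q + t e_i carries a circumscribing cylinder of squared radius |e_j|^2 + |e_k|^2.
   For a cylinder with axis p + t u, write u and q - p in the frame e_i.  The four vertex equations
   differ only by terms linear in the even sign patterns, which forces the product of the three
   coordinates of u to vanish; if only one of them vanished, the radius would exceed that of a
   box-axis cylinder.  So the axis of a minimal cylinder is parallel to some e_i, hence
   perpendicular to the opposite edges 2 (e_j + e_k) and 2 (e_k - e_j). *)

unbundle cross3_syntax

lemma infdist_line:
  fixes x p u :: "real^3"
  assumes u: "u \<noteq> 0"
  shows "infdist x {p + t *\<^sub>R u | t. True} = norm (u \<times> (x - p)) / norm u"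
proof -
  define L where "L = {p + t *\<^sub>R u | t. True}"
  define w where "w = x - p"
  have nu: "u \<bullet> u > 0" using u by simp
  have nu2: "(norm u)\<^sup>2 = u \<bullet> u" by (simp add: power2_norm_eq_inner)
  have cr: "(norm (u \<times> w))\<^sup>2 = (u \<bullet> u) * (w \<bullet> w) - (u \<bullet> w)\<^sup>2"
    using norm_cross[of u w] by (simp add: power2_norm_eq_inner)
  have dist_sq: "(norm (w - t *\<^sub>R u))\<^sup>2 = w \<bullet> w - 2*t*(u \<bullet> w) + t\<^sup>2 * (u \<bullet> u)" for t
    unfolding power2_norm_eq_inner
    by (simp add: inner_diff_left inner_diff_right inner_commute power2_eq_square algebra_simps)
  have dist_on_line: "dist x (p + t *\<^sub>R u) = norm (w - t *\<^sub>R u)" for t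
    unfolding w_def dist_norm by (simp add: algebra_simps)
  have lower: "norm (u \<times> w) / norm u \<le> dist x y" if "y \<in> L" for y
  proof -
    obtain t where y: "y = p + t *\<^sub>R u" using \<open>y \<in> L\<close> unfolding L_def by auto
    have "(norm u * norm (w - t *\<^sub>R u))\<^sup>2 - (norm (u \<times> w))\<^sup>2 = (t * (u \<bullet> u) - u \<bullet> w)\<^sup>2"
      unfolding power_mult_distrib nu2 dist_sq cr by (simp add: power2_eq_square algebra_simps)
    then have "(norm (u \<times> w))\<^sup>2 \<le> (norm u * norm (w - t *\<^sub>R u))\<^sup>2"
      by (metis diff_ge_0_iff_ge zero_le_power2)
    then have "norm (u \<times> w) \<le> norm u * norm (w - t *\<^sub>R u)"
      by (rule power2_le_imp_le) simp
    then show ?thesis unfolding y dist_on_line using u by (simp add: divide_le_eq mult.commute)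
  qed
  define t0 where "t0 = (u \<bullet> w) / (u \<bullet> u)"
  have foot: "p + t0 *\<^sub>R u \<in> L" unfolding L_def by auto
  have "(norm (w - t0 *\<^sub>R u))\<^sup>2 = (norm (u \<times> w) / norm u)\<^sup>2"
    unfolding dist_sq power_divide cr nu2 t0_def using nu by (simp add: power2_eq_square field_simps)
  then have "norm (w - t0 *\<^sub>R u) = norm (u \<times> w) / norm u"
    by (rule power2_eq_imp_eq) simp_all
  then have upper: "infdist x L \<le> norm (u \<times> w) / norm u"
    using infdist_le[OF foot, of x] dist_on_line by simp
  have "norm (u \<times> w) / norm u \<le> infdist x L"
    using foot lower by (subst infdist_notempty) (auto intro: cINF_greatest)
  with upper show ?thesis unfolding L_def w_def by simp
qed

lemma infdist_line_squared:
  fixes x p u :: "real^3"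
  assumes "u \<noteq> 0"
  shows "(infdist x {p + t *\<^sub>R u | t. True})\<^sup>2 * (u \<bullet> u)
    = (u \<bullet> u) * ((x - p) \<bullet> (x - p)) - (u \<bullet> (x - p))\<^sup>2"
proof -
  have "(norm (u \<times> (x - p)))\<^sup>2 = (u \<bullet> u) * ((x - p) \<bullet> (x - p)) - (u \<bullet> (x - p))\<^sup>2"
    using norm_cross[of u "x - p"] by (simp add: power2_norm_eq_inner)
  then show ?thesis
    unfolding infdist_line[OF assms] power_divide using assms by (simp add: power2_norm_eq_inner)
qed

lemma line_perp_line:
  fixes p u w :: "real^3"
  assumes "u \<bullet> w = 0"
  shows "line_perp {p + t *\<^sub>R u | t. True} w"
  unfolding line_perp_def using assms by (auto simp: inner_diff_left algebra_simps)

lemma orthogonal_frame_expansion: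
  fixes e1 e2 e3 v :: "real^3"
  assumes orth: "e1 \<bullet> e2 = 0" "e1 \<bullet> e3 = 0" "e2 \<bullet> e3 = 0" and V: "e1 \<bullet> (e2 \<times> e3) \<noteq> 0"
  shows "v = ((v \<bullet> e1) / (e1 \<bullet> e1)) *\<^sub>R e1 + ((v \<bullet> e2) / (e2 \<bullet> e2)) *\<^sub>R e2
    + ((v \<bullet> e3) / (e3 \<bullet> e3)) *\<^sub>R e3"
proof -
  define V where "V = e1 \<bullet> (e2 \<times> e3)"
  \<comment> \<open>Cramer's rule for the frame\<close>
  have cramer: "V *\<^sub>R v = (v \<bullet> (e2 \<times> e3)) *\<^sub>R e1 + (v \<bullet> (e3 \<times> e1)) *\<^sub>R e2 + (v \<bullet> (e1 \<times> e2)) *\<^sub>R e3"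
    unfolding V_def by (simp add: vec_eq_iff forall_3 cross3_def inner_vec_def sum_3 algebra_simps)
  have orth': "e2 \<bullet> e1 = 0" "e3 \<bullet> e1 = 0" "e3 \<bullet> e2 = 0" using orth by (simp_all add: inner_commute)
  have "e1 \<bullet> e1 \<noteq> 0" "e2 \<bullet> e2 \<noteq> 0" "e3 \<bullet> e3 \<noteq> 0" using V by auto
  moreover have "V * (v \<bullet> e1) = (v \<bullet> (e2 \<times> e3)) * (e1 \<bullet> e1)"
    "V * (v \<bullet> e2) = (v \<bullet> (e3 \<times> e1)) * (e2 \<bullet> e2)"
    "V * (v \<bullet> e3) = (v \<bullet> (e1 \<times> e2)) * (e3 \<bullet> e3)"
    using arg_cong[OF cramer, of "\<lambda>z. z \<bullet> e1"] arg_cong[OF cramer, of "\<lambda>z. z \<bullet> e2"]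
      arg_cong[OF cramer, of "\<lambda>z. z \<bullet> e3"] orth orth'
    by (simp_all add: inner_add_left)
  ultimately have "V *\<^sub>R v = V *\<^sub>R (((v \<bullet> e1) / (e1 \<bullet> e1)) *\<^sub>R e1 + ((v \<bullet> e2) / (e2 \<bullet> e2)) *\<^sub>R e2
      + ((v \<bullet> e3) / (e3 \<bullet> e3)) *\<^sub>R e3)"
    unfolding cramer scaleR_add_right scaleR_scaleR by (simp add: field_simps)
  then show ?thesis using V unfolding V_def by simp
qed

lemma inner_orthogonal_frame:
  fixes e1 e2 e3 :: "real^3"
  assumes "e1 \<bullet> e2 = 0" "e1 \<bullet> e3 = 0" "e2 \<bullet> e3 = 0"
  shows "(x1 *\<^sub>R e1 + x2 *\<^sub>R e2 + x3 *\<^sub>R e3) \<bullet> (y1 *\<^sub>R e1 + y2 *\<^sub>R e2 + y3 *\<^sub>R e3)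
    = x1*y1*(e1 \<bullet> e1) + x2*y2*(e2 \<bullet> e2) + x3*y3*(e3 \<bullet> e3)"
  using assms by (simp add: inner_add_left inner_add_right inner_commute algebra_simps)

lemma infdist_line_orthogonal_frame:
  fixes e1 e2 e3 p u x :: "real^3"
  assumes orth: "e1 \<bullet> e2 = 0" "e1 \<bullet> e3 = 0" "e2 \<bullet> e3 = 0"
    and u: "u = U1 *\<^sub>R e1 + U2 *\<^sub>R e2 + U3 *\<^sub>R e3" "u \<noteq> 0"
    and x: "x - p = x1 *\<^sub>R e1 + x2 *\<^sub>R e2 + x3 *\<^sub>R e3"
  defines "S \<equiv> U1\<^sup>2 * (e1 \<bullet> e1) + U2\<^sup>2 * (e2 \<bullet> e2) + U3\<^sup>2 * (e3 \<bullet> e3)"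
  shows "(infdist x {p + t *\<^sub>R u | t. True})\<^sup>2 * S
    = S * (x1\<^sup>2 * (e1 \<bullet> e1) + x2\<^sup>2 * (e2 \<bullet> e2) + x3\<^sup>2 * (e3 \<bullet> e3))
      - (U1 * x1 * (e1 \<bullet> e1) + U2 * x2 * (e2 \<bullet> e2) + U3 * x3 * (e3 \<bullet> e3))\<^sup>2"
proof -
  have "u \<bullet> u = S" unfolding S_def u(1) inner_orthogonal_frame[OF orth] by (simp add: power2_eq_square)
  moreover have "(x - p) \<bullet> (x - p) = x1\<^sup>2 * (e1 \<bullet> e1) + x2\<^sup>2 * (e2 \<bullet> e2) + x3\<^sup>2 * (e3 \<bullet> e3)"
    unfolding x inner_orthogonal_frame[OF orth] by (simp add: power2_eq_square)
  moreover have "u \<bullet> (x - p) = U1 * x1 * (e1 \<bullet> e1) + U2 * x2 * (e2 \<bullet> e2) + U3 * x3 * (e3 \<bullet> e3)"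
    unfolding x u(1) inner_orthogonal_frame[OF orth] ..
  ultimately show ?thesis using infdist_line_squared[OF u(2), of x p] by simp
qed

lemma triple_product_nonzero_if_independent:
  fixes v1 v2 v3 :: "real^3"
  assumes "independent {v1, v2, v3}" "card {v1, v2, v3} = 3"
  shows "v1 \<bullet> (v2 \<times> v3) \<noteq> 0"
proof
  let ?M = "vector [v1, v2, v3] :: real^3^3"
  assume "v1 \<bullet> (v2 \<times> v3) = 0"
  then have "rank ?M < 3" by (simp add: dot_cross_det det_eq_0_rank)
  moreover have "rows ?M = {v1, v2, v3}"
  proof -
    have "row i ?M \<in> {v1, v2, v3}" for i
      using exhaust_3[of i] by (auto simp: row_def vector_3)
    moreover have "v1 = row 1 ?M" "v2 = row 2 ?M" "v3 = row 3 ?M"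
      by (simp_all add: row_def vector_3)
    ultimately show ?thesis unfolding rows_def by blast
  qed
  then have "rank ?M = 3"
    unfolding row_rank_def using assms dim_eq_card_independent by metis
  ultimately show False by simp
qed

lemma simplex3_triple_product_nonzero:
  fixes a b c d :: "real^3"
  assumes "is_simplex3 a b c d"
  shows "(b - a) \<bullet> ((c - a) \<times> (d - a)) \<noteq> 0"
proof -
  from assms have card: "card {a, b, c, d} = 4" and indep: "\<not> affine_dependent {a, b, c, d}"
    unfolding is_simplex3_def by auto
  have "card {b, c, d} \<le> 3" by (auto simp: card_insert_if)
  with card have a: "a \<notin> {b, c, d}" and "card {b, c, d} = 3"
    by (auto simp: card_insert_if split: if_splits)
  have translate: "(\<lambda>x. -a + x) ` {b, c, d} = {b - a, c - a, d - a}" by auto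
  have "independent {b - a, c - a, d - a}"
    using indep affine_dependent_iff_dependent[OF a] translate by simp
  moreover have "card {b - a, c - a, d - a} = 3"
    using \<open>card {b, c, d} = 3\<close> card_image[of "\<lambda>x. -a + x" "{b, c, d}"] translate by simp
  ultimately show ?thesis by (rule triple_product_nonzero_if_independent)
qed

lemma orthogonal_if_sign_changes_keep_norm:
  fixes x y z :: "'a::real_inner"
  assumes "norm (- x + y + z) = norm (x + y + z)" "norm (x - y + z) = norm (x + y + z)"
    and "norm (x + y - z) = norm (x + y + z)"
  shows "x \<bullet> y = 0 \<and> y \<bullet> z = 0 \<and> x \<bullet> z = 0"
proof -
  have "(- x + y + z) \<bullet> (- x + y + z) = (x + y + z) \<bullet> (x + y + z)"
    "(x - y + z) \<bullet> (x - y + z) = (x + y + z) \<bullet> (x + y + z)"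
    "(x + y - z) \<bullet> (x + y - z) = (x + y + z) \<bullet> (x + y + z)"
    using assms by (simp_all add: power2_norm_eq_inner[symmetric])
  moreover have "y \<bullet> x = x \<bullet> y" "z \<bullet> x = x \<bullet> z" "z \<bullet> y = y \<bullet> z"
    by (simp_all add: inner_commute)
  ultimately show ?thesis
    by (simp add: inner_add_left inner_add_right inner_diff_left inner_diff_right algebra_simps; linarith)
qed

lemma cross_cross_cyclic:
  fixes e1 e2 e3 :: "real^3"
  shows "(e3 \<times> e1) \<times> (e1 \<times> e2) = (e1 \<bullet> (e2 \<times> e3)) *\<^sub>R e1"
    "(e1 \<times> e2) \<times> (e2 \<times> e3) = (e1 \<bullet> (e2 \<times> e3)) *\<^sub>R e2"
    "(e2 \<times> e3) \<times> (e3 \<times> e1) = (e1 \<bullet> (e2 \<times> e3)) *\<^sub>R e3"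
  by (simp_all add: vec_eq_iff forall_3 cross3_def inner_vec_def sum_3 algebra_simps)

lemma orthogonal_if_cross_products_orthogonal:
  fixes e1 e2 e3 :: "real^3"
  assumes "(e2 \<times> e3) \<bullet> (e3 \<times> e1) = 0" "(e3 \<times> e1) \<bullet> (e1 \<times> e2) = 0" "(e2 \<times> e3) \<bullet> (e1 \<times> e2) = 0"
    and V: "e1 \<bullet> (e2 \<times> e3) \<noteq> 0"
  shows "e1 \<bullet> e2 = 0 \<and> e1 \<bullet> e3 = 0 \<and> e2 \<bullet> e3 = 0"
proof -
  define X Y Z where "X = e2 \<times> e3" and "Y = e3 \<times> e1" and "Z = e1 \<times> e2"
  define V where "V = e1 \<bullet> (e2 \<times> e3)"
  have XYZ: "X \<bullet> Y = 0" "Y \<bullet> Z = 0" "X \<bullet> Z = 0" "Y \<bullet> X = 0" "Z \<bullet> Y = 0" "Z \<bullet> X = 0"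
    using assms unfolding X_def Y_def Z_def by (simp_all add: inner_commute)
  have dual: "Y \<times> Z = V *\<^sub>R e1" "Z \<times> X = V *\<^sub>R e2" "X \<times> Y = V *\<^sub>R e3"
    unfolding X_def Y_def Z_def V_def by (rule cross_cross_cyclic)+
  have "(Y \<times> Z) \<bullet> (Z \<times> X) = 0" "(Y \<times> Z) \<bullet> (X \<times> Y) = 0" "(Z \<times> X) \<bullet> (X \<times> Y) = 0"
    unfolding dot_cross using XYZ by simp_all
  then have "V * V * (e1 \<bullet> e2) = 0" "V * V * (e1 \<bullet> e3) = 0" "V * V * (e2 \<bullet> e3) = 0"
    unfolding dual by simp_all
  with V show ?thesis unfolding V_def by simp
qed

lemma equifacial_simplex_box:
  fixes a b c d :: "real^3"
  assumes "is_simplex3 a b c d"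
    and "tri_area b c d = tri_area a c d" "tri_area a c d = tri_area a b d"
    and "tri_area a b d = tri_area a b c"
  obtains q e1 e2 e3
  where "a = q + e1 + e2 + e3" "b = q + e1 - e2 - e3" "c = q - e1 + e2 - e3" "d = q - e1 - e2 + e3"
    and "e1 \<bullet> e2 = 0" "e1 \<bullet> e3 = 0" "e2 \<bullet> e3 = 0" and "e1 \<bullet> (e2 \<times> e3) \<noteq> 0"
proof -
  define q where "q = (1/4) *\<^sub>R (a + b + c + d)"
  define e1 where "e1 = (1/4) *\<^sub>R (a + b - c - d)"
  define e2 where "e2 = (1/4) *\<^sub>R (a - b + c - d)"
  define e3 where "e3 = (1/4) *\<^sub>R (a - b - c + d)"
  have vertices: "a = q + e1 + e2 + e3" "b = q + e1 - e2 - e3" "c = q - e1 + e2 - e3"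
    "d = q - e1 - e2 + e3"
    unfolding q_def e1_def e2_def e3_def by (simp_all add: vec_eq_iff field_simps)
  define X Y Z where "X = e2 \<times> e3" and "Y = e3 \<times> e1" and "Z = e1 \<times> e2"
  have "(b - a) \<bullet> ((c - a) \<times> (d - a)) = -16 * (e1 \<bullet> (e2 \<times> e3))"
    unfolding vertices by (simp add: vec_eq_iff forall_3 cross3_def inner_vec_def sum_3 algebra_simps)
  then have V: "e1 \<bullet> (e2 \<times> e3) \<noteq> 0" using simplex3_triple_product_nonzero[OF assms(1)] by simp
  have facets: "(c - b) \<times> (d - b) = 4 *\<^sub>R (X + Y + Z)" "(c - a) \<times> (d - a) = 4 *\<^sub>R (- X + Y + Z)"
    "(b - a) \<times> (d - a) = -4 *\<^sub>R (X - Y + Z)" "(b - a) \<times> (c - a) = 4 *\<^sub>R (X + Y - Z)"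
    unfolding vertices X_def Y_def Z_def by (simp_all add: vec_eq_iff forall_3 cross3_def algebra_simps)
  have "tri_area b c d = 2 * norm (X + Y + Z)" "tri_area a c d = 2 * norm (- X + Y + Z)"
    "tri_area a b d = 2 * norm (X - Y + Z)" "tri_area a b c = 2 * norm (X + Y - Z)"
    unfolding tri_area_def facets by simp_all
  then have "X \<bullet> Y = 0 \<and> Y \<bullet> Z = 0 \<and> X \<bullet> Z = 0"
    using assms(2-4) by (intro orthogonal_if_sign_changes_keep_norm) simp_all
  then have "e1 \<bullet> e2 = 0 \<and> e1 \<bullet> e3 = 0 \<and> e2 \<bullet> e3 = 0"
    using V unfolding X_def Y_def Z_def by (intro orthogonal_if_cross_products_orthogonal) auto
  with vertices V show ?thesis by (intro that) auto
qed

lemma infdist_box_vertex_to_axis: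
  fixes q e1 e2 e3 :: "real^3"
  assumes orth: "e1 \<bullet> e2 = 0" "e1 \<bullet> e3 = 0" "e2 \<bullet> e3 = 0" and "e1 \<noteq> 0"
    and "s2\<^sup>2 = 1" "s3\<^sup>2 = 1"
  shows "infdist (q + s1 *\<^sub>R e1 + s2 *\<^sub>R e2 + s3 *\<^sub>R e3) {q + t *\<^sub>R e1 | t. True}
    = sqrt (e2 \<bullet> e2 + e3 \<bullet> e3)"
proof -
  let ?d = "infdist (q + s1 *\<^sub>R e1 + s2 *\<^sub>R e2 + s3 *\<^sub>R e3) {q + t *\<^sub>R e1 | t. True}"
  have "?d\<^sup>2 * (e1 \<bullet> e1) = (e1 \<bullet> e1) * (s1\<^sup>2 * (e1 \<bullet> e1) + s2\<^sup>2 * (e2 \<bullet> e2) + s3\<^sup>2 * (e3 \<bullet> e3))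
      - (s1 * (e1 \<bullet> e1))\<^sup>2"
    using infdist_line_orthogonal_frame[OF orth, of e1 1 0 0] \<open>e1 \<noteq> 0\<close> by simp
  also have "\<dots> = (e2 \<bullet> e2 + e3 \<bullet> e3) * (e1 \<bullet> e1)"
    using assms(5,6) by (simp add: power2_eq_square algebra_simps)
  finally have "?d\<^sup>2 = e2 \<bullet> e2 + e3 \<bullet> e3" using \<open>e1 \<noteq> 0\<close> by simp
  then show ?thesis using real_sqrt_unique infdist_nonneg by metis
qed

lemma box_axis_circumscribing_cylinder:
  fixes q e1 e2 e3 :: "real^3"
  assumes orth: "e1 \<bullet> e2 = 0" "e1 \<bullet> e3 = 0" "e2 \<bullet> e3 = 0" and "e1 \<noteq> 0" "e2 \<noteq> 0"
  shows "circumscribing_cylinder {q + t *\<^sub>R e1 | t. True} (sqrt (e2 \<bullet> e2 + e3 \<bullet> e3))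
    (q + e1 + e2 + e3) (q + e1 - e2 - e3) (q - e1 + e2 - e3) (q - e1 - e2 + e3)"
proof -
  have vertex: "infdist (q + s1 *\<^sub>R e1 + s2 *\<^sub>R e2 + s3 *\<^sub>R e3) {q + t *\<^sub>R e1 | t. True}
      = sqrt (e2 \<bullet> e2 + e3 \<bullet> e3)" if "s2 \<in> {-1, 1}" "s3 \<in> {-1, 1}" for s1 s2 s3
    using that by (intro infdist_box_vertex_to_axis[OF orth \<open>e1 \<noteq> 0\<close>]) auto
  have "sqrt (e2 \<bullet> e2 + e3 \<bullet> e3) > 0" using \<open>e2 \<noteq> 0\<close> by (simp add: add_pos_nonneg)
  moreover have "{q + e1 + e2 + e3, q + e1 - e2 - e3, q - e1 + e2 - e3, q - e1 - e2 + e3}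
      \<subseteq> cylinder {q + t *\<^sub>R e1 | t. True} (sqrt (e2 \<bullet> e2 + e3 \<bullet> e3))"
    using vertex[of 1 1 1] vertex[of "-1" "-1" 1] vertex[of 1 "-1" "-1"] vertex[of "-1" 1 "-1"]
    by (simp add: cylinder_def)
  ultimately show ?thesis
    using \<open>e1 \<noteq> 0\<close> unfolding circumscribing_cylinder_def is_line_def by blast
qed

lemma min_circumscribing_cylinder_cong:
  assumes "{a, b, c, d} = {a', b', c', d'}"
  shows "min_circumscribing_cylinder L \<rho> a b c d \<longleftrightarrow> min_circumscribing_cylinder L \<rho> a' b' c' d'"
  using assms unfolding min_circumscribing_cylinder_def circumscribing_cylinder_def by simp

lemma box_min_cylinder_radius_bounds:
  fixes q e1 e2 e3 :: "real^3"
  assumes orth: "e1 \<bullet> e2 = 0" "e1 \<bullet> e3 = 0" "e2 \<bullet> e3 = 0" and nz: "e1 \<noteq> 0" "e2 \<noteq> 0" "e3 \<noteq> 0"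
    and min: "min_circumscribing_cylinder L \<rho>
      (q + e1 + e2 + e3) (q + e1 - e2 - e3) (q - e1 + e2 - e3) (q - e1 - e2 + e3)"
  shows "\<rho>\<^sup>2 \<le> e1 \<bullet> e1 + e2 \<bullet> e2" "\<rho>\<^sup>2 \<le> e1 \<bullet> e1 + e3 \<bullet> e3" "\<rho>\<^sup>2 \<le> e2 \<bullet> e2 + e3 \<bullet> e3"
proof -
  have bound: "\<rho>\<^sup>2 \<le> f2 \<bullet> f2 + f3 \<bullet> f3"
    if "f1 \<bullet> f2 = 0" "f1 \<bullet> f3 = 0" "f2 \<bullet> f3 = 0" "f1 \<noteq> 0" "f2 \<noteq> 0"
      and "min_circumscribing_cylinder L \<rho>
        (q + f1 + f2 + f3) (q + f1 - f2 - f3) (q - f1 + f2 - f3) (q - f1 - f2 + f3)"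
    for f1 f2 f3 :: "real^3"
  proof -
    have "\<rho> \<le> sqrt (f2 \<bullet> f2 + f3 \<bullet> f3)"
      using that box_axis_circumscribing_cylinder[of f1 f2 f3 q]
      unfolding min_circumscribing_cylinder_def by blast
    moreover have "\<rho> > 0"
      using that(6) unfolding min_circumscribing_cylinder_def circumscribing_cylinder_def by blast
    ultimately show ?thesis using sqrt_ge_absD by simp
  qed
  have "min_circumscribing_cylinder L \<rho>
      (q + e2 + e1 + e3) (q + e2 - e1 - e3) (q - e2 + e1 - e3) (q - e2 - e1 + e3)"
    "min_circumscribing_cylinder L \<rho>
      (q + e3 + e1 + e2) (q + e3 - e1 - e2) (q - e3 + e1 - e2) (q - e3 - e1 + e2)"
    by (rule min_circumscribing_cylinder_cong[THEN iffD1, OF _ min]; auto simp: algebra_simps)+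
  with bound[OF orth nz(1,2) min] bound[of e2 e1 e3] bound[of e3 e1 e2] orth nz
  show "\<rho>\<^sup>2 \<le> e1 \<bullet> e1 + e2 \<bullet> e2" "\<rho>\<^sup>2 \<le> e1 \<bullet> e1 + e3 \<bullet> e3" "\<rho>\<^sup>2 \<le> e2 \<bullet> e2 + e3 \<bullet> e3"
    by (simp_all add: inner_commute)
qed

lemma planar_axis_coordinate_vanishes:
  fixes n1 n2 n3 U1 U2 Y1 Y2 Y3 R :: real
  defines "S \<equiv> U1\<^sup>2 * n1 + U2\<^sup>2 * n2" and "P \<equiv> U1 * Y1 * n1 + U2 * Y2 * n2"
  assumes n: "n1 > 0" "n2 > 0" "n3 > 0" and "S > 0"
    and Y3: "S * Y3 * n3 = U1 * U2 * n1 * n2"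
    and R: "R * S = S * (Y1\<^sup>2 * n1 + Y2\<^sup>2 * n2 + Y3\<^sup>2 * n3 + n1 + n2 + n3) - P\<^sup>2
      - (U1\<^sup>2 * n1\<^sup>2 + U2\<^sup>2 * n2\<^sup>2)"
    and R13: "R \<le> n1 + n3" and R23: "R \<le> n2 + n3"
  shows "U1 = 0 \<or> U2 = 0"
proof (rule ccontr)
  assume "\<not> (U1 = 0 \<or> U2 = 0)"
  with n Y3 have "Y3 \<noteq> 0" by auto
  with n \<open>S > 0\<close> have "S * Y3\<^sup>2 * n3 > 0" by simp
  moreover have "S * (Y1\<^sup>2 * n1 + Y2\<^sup>2 * n2) - P\<^sup>2 = n1 * n2 * (U1 * Y2 - U2 * Y1)\<^sup>2"
    unfolding S_def P_def by (simp add: power2_eq_square algebra_simps)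
  moreover have "S * (n1 + n2 + n3) - (U1\<^sup>2 * n1\<^sup>2 + U2\<^sup>2 * n2\<^sup>2) = S * n3 + n1 * n2 * (U1\<^sup>2 + U2\<^sup>2)"
    unfolding S_def by (simp add: power2_eq_square algebra_simps)
  moreover have "n1 * n2 * (U1 * Y2 - U2 * Y1)\<^sup>2 \<ge> 0" using n by simp
  ultimately have "R * S > S * n3 + n1 * n2 * (U1\<^sup>2 + U2\<^sup>2)"
    using R by (simp add: algebra_simps)
  moreover have "n1 * n2 * (U1\<^sup>2 + U2\<^sup>2) \<ge> min n1 n2 * S"
  proof -
    have "n1 * n2 * (U1\<^sup>2 + U2\<^sup>2) - n1 * S = n1 * U1\<^sup>2 * (n2 - n1)"
      "n1 * n2 * (U1\<^sup>2 + U2\<^sup>2) - n2 * S = n2 * U2\<^sup>2 * (n1 - n2)"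
      unfolding S_def by (simp_all add: algebra_simps)
    moreover have "n1 \<le> n2 \<Longrightarrow> n1 * U1\<^sup>2 * (n2 - n1) \<ge> 0" "n2 \<le> n1 \<Longrightarrow> n2 * U2\<^sup>2 * (n1 - n2) \<ge> 0"
      using n by simp_all
    ultimately show ?thesis by (cases "n1 \<le> n2") (simp_all add: min_def)
  qed
  moreover have "R * S \<le> (min n1 n2 + n3) * S"
    using \<open>S > 0\<close> R13 R23 by (intro mult_right_mono) auto
  ultimately show False by (simp add: algebra_simps)
qed

lemma cylinder_axis_coordinates_two_vanish:
  fixes n1 n2 n3 U1 U2 U3 Y1 Y2 Y3 R :: real
  defines "S \<equiv> U1\<^sup>2 * n1 + U2\<^sup>2 * n2 + U3\<^sup>2 * n3"
  defines "F \<equiv> \<lambda>x1 x2 x3. S * (x1\<^sup>2 * n1 + x2\<^sup>2 * n2 + x3\<^sup>2 * n3)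
    - (U1 * x1 * n1 + U2 * x2 * n2 + U3 * x3 * n3)\<^sup>2"
  assumes n: "n1 > 0" "n2 > 0" "n3 > 0" and "S > 0"
    and vertices: "F (Y1 + 1) (Y2 + 1) (Y3 + 1) = R * S" "F (Y1 + 1) (Y2 - 1) (Y3 - 1) = R * S"
      "F (Y1 - 1) (Y2 + 1) (Y3 - 1) = R * S" "F (Y1 - 1) (Y2 - 1) (Y3 + 1) = R * S"
    and R: "R \<le> n1 + n2" "R \<le> n1 + n3" "R \<le> n2 + n3"
  shows "(U2 = 0 \<and> U3 = 0) \<or> (U1 = 0 \<and> U3 = 0) \<or> (U1 = 0 \<and> U2 = 0)"
proof -
  define P where "P = U1 * Y1 * n1 + U2 * Y2 * n2 + U3 * Y3 * n3"
  define c1 where "c1 = S * Y1 * n1 - P * U1 * n1 - U2 * U3 * n2 * n3"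
  define c2 where "c2 = S * Y2 * n2 - P * U2 * n2 - U1 * U3 * n1 * n3"
  define c3 where "c3 = S * Y3 * n3 - P * U3 * n3 - U1 * U2 * n1 * n2"
  define C where "C = S * (Y1\<^sup>2 * n1 + Y2\<^sup>2 * n2 + Y3\<^sup>2 * n3 + n1 + n2 + n3) - P\<^sup>2
    - (U1\<^sup>2 * n1\<^sup>2 + U2\<^sup>2 * n2\<^sup>2 + U3\<^sup>2 * n3\<^sup>2)"
  \<comment> \<open>at an even sign pattern s, the products s_i s_j equal the remaining sign s_k\<close>
  have sums: "C + 2 * (c1 + c2 + c3) = R * S" "C + 2 * (c1 - c2 - c3) = R * S"
    "C + 2 * (- c1 + c2 - c3) = R * S" "C + 2 * (- c1 - c2 + c3) = R * S"
    using vertices unfolding F_def C_def c1_def c2_def c3_def P_def S_def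
    by (simp_all add: power2_eq_square algebra_simps)
  have c: "c1 = 0" "c2 = 0" "c3 = 0" using sums by (auto simp: algebra_simps)
  with sums have RS: "R * S = C" by simp
  \<comment> \<open>the Y terms cancel: u is the kernel direction of the quadratic form of the cylinder\<close>
  have "U1 * c1 + U2 * c2 + U3 * c3 = - (U1 * U2 * U3) * (n2 * n3 + n1 * n3 + n1 * n2)"
    unfolding c1_def c2_def c3_def P_def S_def by (simp add: power2_eq_square algebra_simps)
  moreover have "n2 * n3 + n1 * n3 + n1 * n2 > 0" using n by (simp add: add_pos_pos)
  ultimately have "U1 = 0 \<or> U2 = 0 \<or> U3 = 0" using c by auto
  then show ?thesis
  proof (elim disjE)
    assume "U3 = 0"
    then have "U1 = 0 \<or> U2 = 0"
      using planar_axis_coordinate_vanishes[of n1 n2 n3 U1 U2 Y3 R Y1 Y2] n \<open>S > 0\<close> R RS c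
      unfolding P_def C_def c3_def S_def by (simp add: algebra_simps)
    with \<open>U3 = 0\<close> show ?thesis by auto
  next
    assume "U1 = 0"
    then have "U2 = 0 \<or> U3 = 0"
      using planar_axis_coordinate_vanishes[of n2 n3 n1 U2 U3 Y1 R Y2 Y3] n \<open>S > 0\<close> R RS c
      unfolding P_def C_def c1_def S_def by (simp add: algebra_simps)
    with \<open>U1 = 0\<close> show ?thesis by auto
  next
    assume "U2 = 0"
    then have "U1 = 0 \<or> U3 = 0"
      using planar_axis_coordinate_vanishes[of n1 n3 n2 U1 U3 Y2 R Y1 Y3] n \<open>S > 0\<close> R RS c
      unfolding P_def C_def c2_def S_def by (simp add: algebra_simps)
    with \<open>U2 = 0\<close> show ?thesis by auto
  qed
qed

lemma box_min_cylinder_axis_along_frame: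
  fixes q e1 e2 e3 p u :: "real^3"
  assumes orth: "e1 \<bullet> e2 = 0" "e1 \<bullet> e3 = 0" "e2 \<bullet> e3 = 0" and V: "e1 \<bullet> (e2 \<times> e3) \<noteq> 0"
    and u: "u \<noteq> 0"
    and min: "min_circumscribing_cylinder {p + t *\<^sub>R u | t. True} \<rho>
      (q + e1 + e2 + e3) (q + e1 - e2 - e3) (q - e1 + e2 - e3) (q - e1 - e2 + e3)"
  shows "(u \<bullet> e2 = 0 \<and> u \<bullet> e3 = 0) \<or> (u \<bullet> e1 = 0 \<and> u \<bullet> e3 = 0) \<or> (u \<bullet> e1 = 0 \<and> u \<bullet> e2 = 0)"
proof -
  define n1 n2 n3 where "n1 = e1 \<bullet> e1" and "n2 = e2 \<bullet> e2" and "n3 = e3 \<bullet> e3"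
  have nz: "e1 \<noteq> 0" "e2 \<noteq> 0" "e3 \<noteq> 0" using V by auto
  then have n: "n1 > 0" "n2 > 0" "n3 > 0" unfolding n1_def n2_def n3_def by simp_all
  have R: "\<rho>\<^sup>2 \<le> n1 + n2" "\<rho>\<^sup>2 \<le> n1 + n3" "\<rho>\<^sup>2 \<le> n2 + n3"
    using box_min_cylinder_radius_bounds[OF orth nz min] unfolding n1_def n2_def n3_def .
  define U1 U2 U3 where "U1 = (u \<bullet> e1) / n1" and "U2 = (u \<bullet> e2) / n2" and "U3 = (u \<bullet> e3) / n3"
  define Y1 Y2 Y3 where "Y1 = ((q - p) \<bullet> e1) / n1" and "Y2 = ((q - p) \<bullet> e2) / n2"
    and "Y3 = ((q - p) \<bullet> e3) / n3"
  define S where "S = U1\<^sup>2 * n1 + U2\<^sup>2 * n2 + U3\<^sup>2 * n3"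
  have u_frame: "u = U1 *\<^sub>R e1 + U2 *\<^sub>R e2 + U3 *\<^sub>R e3"
    unfolding U1_def U2_def U3_def n1_def n2_def n3_def by (rule orthogonal_frame_expansion[OF orth V])
  have q_frame: "q - p = Y1 *\<^sub>R e1 + Y2 *\<^sub>R e2 + Y3 *\<^sub>R e3"
    unfolding Y1_def Y2_def Y3_def n1_def n2_def n3_def by (rule orthogonal_frame_expansion[OF orth V])
  have "u \<bullet> u = S" unfolding S_def n1_def n2_def n3_def
    by (subst (1 2) u_frame) (simp add: inner_orthogonal_frame[OF orth] power2_eq_square)
  with u have "S > 0" by (metis inner_gt_zero_iff)
  have vertex: "S * ((Y1 + s1)\<^sup>2 * n1 + (Y2 + s2)\<^sup>2 * n2 + (Y3 + s3)\<^sup>2 * n3)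
      - (U1 * (Y1 + s1) * n1 + U2 * (Y2 + s2) * n2 + U3 * (Y3 + s3) * n3)\<^sup>2 = \<rho>\<^sup>2 * S"
    if "q + s1 *\<^sub>R e1 + s2 *\<^sub>R e2 + s3 *\<^sub>R e3
      \<in> {q + e1 + e2 + e3, q + e1 - e2 - e3, q - e1 + e2 - e3, q - e1 - e2 + e3}" for s1 s2 s3
  proof -
    let ?v = "q + s1 *\<^sub>R e1 + s2 *\<^sub>R e2 + s3 *\<^sub>R e3"
    have "infdist ?v {p + t *\<^sub>R u | t. True} = \<rho>"
      using min that unfolding min_circumscribing_cylinder_def circumscribing_cylinder_def cylinder_def
      by blast
    moreover have "?v - p = (Y1 + s1) *\<^sub>R e1 + (Y2 + s2) *\<^sub>R e2 + (Y3 + s3) *\<^sub>R e3"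
      using q_frame by (simp add: algebra_simps)
    note infdist_line_orthogonal_frame[OF orth u_frame u this]
    ultimately show ?thesis unfolding S_def n1_def n2_def n3_def by (simp add: mult.commute)
  qed
  have "(U2 = 0 \<and> U3 = 0) \<or> (U1 = 0 \<and> U3 = 0) \<or> (U1 = 0 \<and> U2 = 0)"
    using cylinder_axis_coordinates_two_vanish[of n1 n2 n3 U1 U2 U3 Y1 Y2 Y3 "\<rho>\<^sup>2"] n \<open>S > 0\<close> R
      vertex[of 1 1 1] vertex[of 1 "-1" "-1"] vertex[of "-1" 1 "-1"] vertex[of "-1" "-1" 1]
    unfolding S_def by simp
  then show ?thesis using n unfolding U1_def U2_def U3_def by auto
qed

theorem mainTheorem4:
  fixes a b c d :: "real^3" and L :: "(real^3) set" and \<rho> :: real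
  assumes "is_simplex3 a b c d"
    and "tri_area b c d = tri_area a c d"
    and "tri_area a c d = tri_area a b d"
    and "tri_area a b d = tri_area a b c"
    and "min_circumscribing_cylinder L \<rho> a b c d"
  shows "(line_perp L (b - a) \<and> line_perp L (d - c)) \<or>
         (line_perp L (c - a) \<and> line_perp L (d - b)) \<or>
         (line_perp L (d - a) \<and> line_perp L (c - b))"
proof -
  obtain q e1 e2 e3 where vertices: "a = q + e1 + e2 + e3" "b = q + e1 - e2 - e3"
      "c = q - e1 + e2 - e3" "d = q - e1 - e2 + e3"
    and orth: "e1 \<bullet> e2 = 0" "e1 \<bullet> e3 = 0" "e2 \<bullet> e3 = 0" and V: "e1 \<bullet> (e2 \<times> e3) \<noteq> 0"
    using equifacial_simplex_box[OF assms(1-4)] by blast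
  obtain p u where u: "u \<noteq> 0" and L: "L = {p + t *\<^sub>R u | t. True}"
    using assms(5) unfolding min_circumscribing_cylinder_def circumscribing_cylinder_def is_line_def
    by blast
  have axis: "(u \<bullet> e2 = 0 \<and> u \<bullet> e3 = 0) \<or> (u \<bullet> e1 = 0 \<and> u \<bullet> e3 = 0) \<or> (u \<bullet> e1 = 0 \<and> u \<bullet> e2 = 0)"
    using box_min_cylinder_axis_along_frame[OF orth V u] assms(5) unfolding vertices L by blast
  have edges: "b - a = -2 *\<^sub>R (e2 + e3)" "d - c = 2 *\<^sub>R (e3 - e2)"
    "c - a = -2 *\<^sub>R (e1 + e3)" "d - b = 2 *\<^sub>R (e3 - e1)"
    "d - a = -2 *\<^sub>R (e1 + e2)" "c - b = 2 *\<^sub>R (e2 - e1)"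
    unfolding vertices by (simp_all add: algebra_simps scaleR_2)
  have perp: "line_perp L w" if "u \<bullet> w = 0" for w
    unfolding L using that by (rule line_perp_line)
  from axis show ?thesis
    unfolding edges by (elim disjE) (simp_all add: perp inner_add_right inner_diff_right)
qed

end
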